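(* Setting and construction as in the context. Assume $g$ is convex and Lipschitz continuous. Then $\underline{v}$ is a continuous viscosity subsolution of $-v_t(t,x)+H(t,x,\nabla v(t,x))=0$ on $(0,T)\times\mathbb{R}^n$, where $H(t,x,p)=\max_{u\in\mathbb{U}}\min_{d\in\mathbb{D}}\langle -p,A(t)x+B(t)u+E(t)d\rangle$.
   Context: Fix $T>0$, integers $n,m,\ell\ge1$, $A\in C([0,T];\mathbb{R}^{n\times n})$, $B\in C([0,T];\mathbb{R}^{n\times m})$, $E\in C([0,T];\mathbb{R}^{n\times\ell})$, compact convex nonempty $\mathbb{U}\subset\mathbb{R}^m$, $\mathbb{D}\subset\mathbb{R}^\ell$, and $g\in C(\mathbb{R}^n;\mathbb{R})$. $D^-g(\bar x)$ is the set of $p\in\mathbb{R}^n$ with $\liminf_{x\to\bar x}\frac{g(x)-g(\bar x)-\langle p,x-\bar x\rangle}{\|x-\bar x\|}\ge0$. Construction: $N\in\mathbb{N}$, levels $\gamma_1,\dots,\gamma_N\in g(\mathbb{R}^n)$, $n_k\in\mathbb{N}$, points $\bar x_{i,k}\in g^{-1}(\{\gamma_k\})$ and $p_{i,k}\in D^-g(\bar x_{i,k})$; $(\lambda_{i,k},q_{i,k})$ is the solution on $[0,T]$ of $\dot\lambda(s)=-A(s)'\lambda(s)$, $\dot q(s)=\max_{u\in\mathbb{U}}\min_{d\in\mathbb{D}}\langle-\lambda(s),B(s)u+E(s)d\rangle$, with $\lambda_{i,k}(T)=p_{i,k}$, $q_{i,k}(T)=-\langle p_{i,k},\bar x_{i,k}\rangle+\gamma_k$;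 and $\underline{v}(t,x)=\max_{k}\max_{i}\big(\langle\lambda_{i,k}(t),x\rangle+q_{i,k}(t)\big)$. For continuous $f$ and $(t_0,x_0)\in(0,T)\times\mathbb{R}^n$, $D^+f(t_0,x_0)$ is the set of $(q,p)\in\mathbb{R}\times\mathbb{R}^n$ with $\limsup_{(t,x)\to(t_0,x_0)}\frac{f(t,x)-f(t_0,x_0)-\langle(q,p),(t,x)-(t_0,x_0)\rangle}{\|(t,x)-(t_0,x_0)\|}\le0$; $f$ is a viscosity subsolution if $-q+H(t_0,x_0,p)\le 0$ for all such $(t_0,x_0)$ and $(q,p)\in D^+f(t_0,x_0)$. *)

theory Defs
  imports "HOL-Analysis.Analysis"
begin

definition subdiff_lower :: "('a::real_inner \<Rightarrow> real) \<Rightarrow> 'a \<Rightarrow> 'a set" where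
  "subdiff_lower g xb = {p. Liminf (at xb)
      (\<lambda>x. ereal ((g x - g xb - inner p (x - xb)) / norm (x - xb))) \<ge> 0}"

definition superdiff_upper :: "('a::real_inner \<Rightarrow> real) \<Rightarrow> 'a \<Rightarrow> 'a set" where
  "superdiff_upper f z0 = {w. Limsup (at z0)
      (\<lambda>z. ereal ((f z - f z0 - inner w (z - z0)) / norm (z - z0))) \<le> 0}"

text \<open>Hamiltonian H(t,x,p) = max_{u in U} min_{d in D} <-p, A(t)x + B(t)u + E(t)d>
  (max/min over compact nonempty sets written as SUP/INF, which are attained).\<close>
definition hamiltonian ::
  "(real \<Rightarrow> real^'n^'n) \<Rightarrow> (real \<Rightarrow> real^'m^'n) \<Rightarrow> (real \<Rightarrow> real^'l^'n) \<Rightarrow>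
   (real^'m) set \<Rightarrow> (real^'l) set \<Rightarrow> real \<Rightarrow> real^'n \<Rightarrow> real^'n \<Rightarrow> real" where
  "hamiltonian A B E U D t x p =
     (SUP u\<in>U. INF d\<in>D. inner (- p) (A t *v x + B t *v u + E t *v d))"

definition viscosity_subsolution ::
  "real \<Rightarrow> (real \<Rightarrow> 'a::real_inner \<Rightarrow> 'a \<Rightarrow> real) \<Rightarrow> (real \<Rightarrow> 'a \<Rightarrow> real) \<Rightarrow> bool" where
  "viscosity_subsolution T H f \<longleftrightarrow>
     continuous_on ({0<..<T} \<times> UNIV) (\<lambda>(t,x). f t x) \<and>
     (\<forall>t0\<in>{0<..<T}. \<forall>x0. \<forall>(q,p)\<in>superdiff_upper (\<lambda>(t,x). f t x) (t0,x0).
        - q + H t0 x0 p \<le> 0)"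

end

theory Submission imports Defs begin

text \<open>Each piece \<open>\<phi>(t, x) = \<langle>\<lambda>(t), x\<rangle> + q(t)\<close> is a classical solution of
  \<open>-\<phi>\<^sub>t + H(t, x, \<nabla>\<^sub>x \<phi>) = 0\<close>, because by the two ODEs
  \<open>\<phi>\<^sub>t = \<langle>-\<lambda>, A x\<rangle> + max\<^sub>u min\<^sub>d \<langle>-\<lambda>, B u + E d\<rangle> = H(t, x, \<lambda>)\<close>.
  At any point the maximum of the pieces is touched from below by an active piece, and a function
  touched from below by a differentiable one can only have that one's gradient in its
  superdifferential. Hence every superdifferential of the maximum is the full gradient of a
  classical solution, where the equation holds with equality.\<close>

lemma continuous_Max:
  fixes f :: "'i \<Rightarrow> 'a::t2_space \<Rightarrow> 'b::linorder_topology"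
  assumes "finite J" "J \<noteq> {}" "\<And>j. j \<in> J \<Longrightarrow> continuous F (f j)"
  shows "continuous F (\<lambda>z. Max ((\<lambda>j. f j z) ` J))"
  using assms
proof (induction J rule: finite_ne_induct)
  case (singleton j)
  then show ?case by simp
next
  case (insert j J)
  then have "continuous F (\<lambda>z. max (f j z) (Max ((\<lambda>j. f j z) ` J)))"
    by (intro continuous_max) auto
  with insert show ?case by simp
qed

lemma superdiff_upper_touching_below:
  assumes "\<And>z. \<phi> z \<le> f z" and "\<phi> z0 = f z0"
  shows "superdiff_upper f z0 \<subseteq> superdiff_upper \<phi> z0"
proof
  fix w assume "w \<in> superdiff_upper f z0"
  moreover have "Limsup (at z0) (\<lambda>z. ereal ((\<phi> z - \<phi> z0 - inner w (z - z0)) / norm (z - z0)))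
      \<le> Limsup (at z0) (\<lambda>z. ereal ((f z - f z0 - inner w (z - z0)) / norm (z - z0)))"
    using assms by (intro Limsup_mono always_eventually allI) (simp add: divide_right_mono)
  ultimately show "w \<in> superdiff_upper \<phi> z0"
    unfolding superdiff_upper_def by simp
qed

lemma superdiff_upper_differentiable:
  fixes \<phi> :: "'a::real_inner \<Rightarrow> real"
  assumes der: "(\<phi> has_derivative (\<lambda>h. inner g h)) (at z0)"
    and w: "w \<in> superdiff_upper \<phi> z0"
  shows "w = g"
proof (rule ccontr)
  assume "w \<noteq> g"
  define e where "e = g - w"
  define \<epsilon> where "\<epsilon> = norm e / 4"
  have e: "norm e > 0" and \<epsilon>: "\<epsilon> > 0"
    using \<open>w \<noteq> g\<close> unfolding e_def \<epsilon>_def by auto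
  have "Limsup (at z0) (\<lambda>z. ereal ((\<phi> z - \<phi> z0 - inner w (z - z0)) / norm (z - z0))) < ereal \<epsilon>"
    using w \<epsilon> unfolding superdiff_upper_def by (simp add: le_less_trans)
  from Limsup_lessD[OF this] obtain d1 where d1: "d1 > 0"
    "\<And>z. z \<noteq> z0 \<Longrightarrow> dist z z0 < d1 \<Longrightarrow> (\<phi> z - \<phi> z0 - inner w (z - z0)) / norm (z - z0) < \<epsilon>"
    unfolding eventually_at by auto
  from der \<epsilon> obtain d2 where d2: "d2 > 0"
    "\<And>z. norm (z - z0) < d2 \<Longrightarrow> norm (\<phi> z - \<phi> z0 - inner g (z - z0)) \<le> \<epsilon> * norm (z - z0)"
    unfolding has_derivative_within_alt by blast
  \<comment> \<open>Step from \<open>z0\<close> in the direction \<open>g - w\<close>: there \<open>\<phi>\<close> grows like \<open>g\<close>, faster than \<open>w\<close> permits.\<close>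
  define s where "s = min d1 d2 / 2"
  define z where "z = z0 + (s / norm e) *\<^sub>R e"
  have s: "s > 0" "s < d1" "s < d2" using d1 d2 unfolding s_def by auto
  have z: "z - z0 = (s / norm e) *\<^sub>R e" unfolding z_def by simp
  have nz: "norm (z - z0) = s" using e s unfolding z by simp
  have ez: "inner e (z - z0) = s * norm e"
    using e unfolding z by (simp add: power2_norm_eq_inner[symmetric] power2_eq_square)
  have "\<phi> z - \<phi> z0 - inner w (z - z0) < \<epsilon> * s"
    using d1(2)[of z] nz s by (auto simp: dist_norm divide_less_eq)
  moreover have "\<phi> z - \<phi> z0 - inner g (z - z0) \<ge> - (\<epsilon> * s)"
    using d2(2)[of z] nz s by (simp add: abs_le_iff)
  ultimately have "inner e (z - z0) < 2 * \<epsilon> * s"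
    unfolding e_def by (simp add: inner_diff_left)
  with ez s e show False unfolding \<epsilon>_def by simp
qed

lemma superdiff_upper_Max_subset_active_gradients:
  fixes \<phi> :: "'i \<Rightarrow> 'a::real_inner \<Rightarrow> real"
  assumes J: "finite J" "J \<noteq> {}"
    and der: "\<And>j. j \<in> J \<Longrightarrow> (\<phi> j has_derivative (\<lambda>h. inner (G j) h)) (at z0)"
    and w: "w \<in> superdiff_upper (\<lambda>z. Max ((\<lambda>j. \<phi> j z) ` J)) z0"
  shows "\<exists>j\<in>J. w = G j"
proof -
  have "Max ((\<lambda>j. \<phi> j z0) ` J) \<in> (\<lambda>j. \<phi> j z0) ` J"
    using J by (intro Max_in) auto
  then obtain j where j: "j \<in> J" "\<phi> j z0 = Max ((\<lambda>j. \<phi> j z0) ` J)"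
    by auto
  have "\<phi> j z \<le> Max ((\<lambda>j. \<phi> j z) ` J)" for z
    using J j by simp
  with j w have "w \<in> superdiff_upper (\<phi> j) z0"
    using superdiff_upper_touching_below[of "\<phi> j" "\<lambda>z. Max ((\<lambda>j. \<phi> j z) ` J)" z0] by blast
  with der j show ?thesis
    using superdiff_upper_differentiable by blast
qed

lemma viscosity_subsolution_Max_classical_solutions:
  fixes \<phi> :: "'i \<Rightarrow> real \<times> 'a::real_inner \<Rightarrow> real"
  assumes J: "finite J" "J \<noteq> {}"
    and v: "\<And>t x. v t x = Max ((\<lambda>j. \<phi> j (t, x)) ` J)"
    and grad: "\<And>j t x. j \<in> J \<Longrightarrow> t \<in> {0<..<T} \<Longrightarrow>
      (\<phi> j has_derivative (\<lambda>h. inner (H t x (P j t x), P j t x) h)) (at (t, x))"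
  shows "viscosity_subsolution T H v"
proof -
  have v': "(\<lambda>(t, x). v t x) = (\<lambda>z. Max ((\<lambda>j. \<phi> j z) ` J))"
    using v by auto
  show ?thesis
    unfolding viscosity_subsolution_def v'
  proof (intro conjI ballI allI)
    show "continuous_on ({0<..<T} \<times> UNIV) (\<lambda>z. Max ((\<lambda>j. \<phi> j z) ` J))"
    proof (intro continuous_at_imp_continuous_on ballI)
      fix z :: "real \<times> 'a"
      assume "z \<in> {0<..<T} \<times> UNIV"
      then obtain t x where "z = (t, x)" "t \<in> {0<..<T}" by auto
      then show "isCont (\<lambda>z. Max ((\<lambda>j. \<phi> j z) ` J)) z"
        by (auto intro!: continuous_Max[OF J] has_derivative_continuous[OF grad])
    qed
  next
    fix t x w
    assume "t \<in> {0<..<T}" and "w \<in> superdiff_upper (\<lambda>z. Max ((\<lambda>j. \<phi> j z) ` J)) (t, x)"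
    then obtain j where "w = (H t x (P j t x), P j t x)"
      using superdiff_upper_Max_subset_active_gradients[OF J, of \<phi> "\<lambda>j. (H t x (P j t x), P j t x)"]
        grad by blast
    then show "case w of (q, p) \<Rightarrow> - q + H t x p \<le> 0"
      by simp
  qed
qed

lemma has_derivative_affine_in_space:
  fixes l :: "real \<Rightarrow> 'a::real_inner" and c :: "real \<Rightarrow> real"
  assumes l: "(l has_vector_derivative L) (at t0)" and c: "(c has_real_derivative C) (at t0)"
  shows "((\<lambda>(t, x). inner (l t) x + c t) has_derivative (\<lambda>h. inner (C + inner L x0, l t0) h))
    (at (t0, x0))"
proof -
  have "((\<lambda>z. l (fst z)) has_derivative (\<lambda>h. fst h *\<^sub>R L)) (at (t0, x0))"
    using has_derivative_compose[OF has_derivative_fst[OF has_derivative_ident]] l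
    by (auto simp: has_vector_derivative_def)
  moreover have "((\<lambda>z. c (fst z)) has_derivative (\<lambda>h. fst h * C)) (at (t0, x0))"
    using has_derivative_compose[OF has_derivative_fst[OF has_derivative_ident]] c
    by (auto simp: has_field_derivative_def mult.commute)
  ultimately have "((\<lambda>z. inner (l (fst z)) (snd z) + c (fst z)) has_derivative
      (\<lambda>h. inner (l t0) (snd h) + inner (fst h *\<^sub>R L) x0 + fst h * C)) (at (t0, x0))"
    by (auto intro!: derivative_eq_intros)
  moreover have "(\<lambda>h. inner (l t0) (snd h) + inner (fst h *\<^sub>R L) x0 + fst h * C)
      = (\<lambda>h. inner (C + inner L x0, l t0) h)"
    by (auto simp: inner_prod_def algebra_simps)
  ultimately show ?thesis
    by (simp add: split_beta')
qed

lemma SUP_INF_add_const: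
  fixes f :: "'a \<Rightarrow> 'b \<Rightarrow> real"
  assumes U: "U \<noteq> {}" and D: "D \<noteq> {}" and bounded: "bounded ((\<lambda>(u, d). f u d) ` (U \<times> D))"
  shows "(SUP u\<in>U. INF d\<in>D. c + f u d) = c + (SUP u\<in>U. INF d\<in>D. f u d)"
proof -
  obtain M where M: "\<And>u d. u \<in> U \<Longrightarrow> d \<in> D \<Longrightarrow> \<bar>f u d\<bar> \<le> M"
    using bounded unfolding bounded_real by force
  obtain d0 where d0: "d0 \<in> D" using D by auto
  have below: "bdd_below (f u ` D)" if "u \<in> U" for u
    using M[OF that] by (intro bdd_belowI[of _ "- M"]) force
  have "(INF d\<in>D. f u d) \<le> M" if "u \<in> U" for u
    using cINF_lower[OF below[OF that] d0] M[OF that d0] by linarith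
  then have above: "bdd_above ((\<lambda>u. INF d\<in>D. f u d) ` U)"
    by (intro bdd_aboveI[of _ M]) auto
  have "(SUP u\<in>U. INF d\<in>D. c + f u d) = (SUP u\<in>U. c + (INF d\<in>D. f u d))"
    using below D by (intro SUP_cong refl Inf_add_eq)
  also have "\<dots> = c + (SUP u\<in>U. INF d\<in>D. f u d)"
    using above U by (rule Sup_add_eq)
  finally show ?thesis .
qed

lemma hamiltonian_eq:
  assumes "compact U" "U \<noteq> {}" "compact D" "D \<noteq> {}"
  shows "hamiltonian A B E U D t x p
    = - inner p (A t *v x) + (SUP u\<in>U. INF d\<in>D. inner (- p) (B t *v u + E t *v d))"
proof -
  have "continuous_on (U \<times> D) (\<lambda>(u, d). inner (- p) (B t *v u + E t *v d))"
    unfolding split_beta'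
    by (intro continuous_intros bounded_linear.continuous_on[OF matrix_vector_mul_bounded_linear])
  then have "bounded ((\<lambda>(u, d). inner (- p) (B t *v u + E t *v d)) ` (U \<times> D))"
    using assms by (intro compact_imp_bounded compact_continuous_image compact_Times)
  then have "(SUP u\<in>U. INF d\<in>D. - inner p (A t *v x) + inner (- p) (B t *v u + E t *v d))
      = - inner p (A t *v x) + (SUP u\<in>U. INF d\<in>D. inner (- p) (B t *v u + E t *v d))"
    using assms by (intro SUP_INF_add_const) auto
  moreover have "inner (- p) (A t *v x + B t *v u + E t *v d)
      = - inner p (A t *v x) + inner (- p) (B t *v u + E t *v d)" for u d
    by (simp add: inner_add_right)
  ultimately show ?thesis
    unfolding hamiltonian_def by simp
qed

lemma has_derivative_characteristic_affine:
  assumes "compact U" "U \<noteq> {}" "compact D" "D \<noteq> {}"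
    and l: "(l has_vector_derivative (- (transpose (A t0) *v l t0))) (at t0)"
    and c: "(c has_real_derivative (SUP u\<in>U. INF d\<in>D. inner (- l t0) (B t0 *v u + E t0 *v d))) (at t0)"
  shows "((\<lambda>(t, x). inner (l t) x + c t) has_derivative
      (\<lambda>h. inner (hamiltonian A B E U D t0 x0 (l t0), l t0) h)) (at (t0, x0))"
proof -
  have "inner (- (transpose (A t0) *v l t0)) x0 = - inner (l t0) (A t0 *v x0)"
    by (simp add: dot_lmul_matrix)
  with has_derivative_affine_in_space[OF l c, of x0] show ?thesis
    using assms(1-4) by (simp add: hamiltonian_eq add.commute)
qed

theorem lemma5:
  fixes T :: real
    and A :: "real \<Rightarrow> real^'n^'n"
    and B :: "real \<Rightarrow> real^'m^'n"
    and E :: "real \<Rightarrow> real^'l^'n"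
    and U :: "(real^'m) set" and D :: "(real^'l) set"
    and g :: "real^'n \<Rightarrow> real"
    and N :: nat and nk :: "nat \<Rightarrow> nat"
    and \<gamma> :: "nat \<Rightarrow> real"
    and xb :: "nat \<Rightarrow> nat \<Rightarrow> real^'n" and p :: "nat \<Rightarrow> nat \<Rightarrow> real^'n"
    and lam :: "nat \<Rightarrow> nat \<Rightarrow> real \<Rightarrow> real^'n" and q :: "nat \<Rightarrow> nat \<Rightarrow> real \<Rightarrow> real"
    and v :: "real \<Rightarrow> real^'n \<Rightarrow> real"
  assumes T: "T > 0"
    and A: "continuous_on {0..T} A" and B: "continuous_on {0..T} B" and E: "continuous_on {0..T} E"
    and U: "compact U" "convex U" "U \<noteq> {}"
    and D: "compact D" "convex D" "D \<noteq> {}"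
    and g_cont: "continuous_on UNIV g"
    and g_convex: "convex_on UNIV g"
    and g_lip: "\<exists>L. L-lipschitz_on UNIV g"
    and N: "N \<ge> 1"
    and nk: "\<forall>k\<in>{1..N}. nk k \<ge> 1"
    and levels: "\<forall>k\<in>{1..N}. \<gamma> k \<in> range g"
    and pts: "\<forall>k\<in>{1..N}. \<forall>i\<in>{1..nk k}. g (xb i k) = \<gamma> k"
    and subgr: "\<forall>k\<in>{1..N}. \<forall>i\<in>{1..nk k}. p i k \<in> subdiff_lower g (xb i k)"
    and lam_ode: "\<forall>k\<in>{1..N}. \<forall>i\<in>{1..nk k}. \<forall>s\<in>{0..T}.
        (lam i k has_vector_derivative (- (transpose (A s) *v lam i k s))) (at s within {0..T})"
    and q_ode: "\<forall>k\<in>{1..N}. \<forall>i\<in>{1..nk k}. \<forall>s\<in>{0..T}.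
        (q i k has_real_derivative
           (SUP u\<in>U. INF d\<in>D. inner (- lam i k s) (B s *v u + E s *v d))) (at s within {0..T})"
    and lam_T: "\<forall>k\<in>{1..N}. \<forall>i\<in>{1..nk k}. lam i k T = p i k"
    and q_T: "\<forall>k\<in>{1..N}. \<forall>i\<in>{1..nk k}. q i k T = - inner (p i k) (xb i k) + \<gamma> k"
    and v_def: "\<forall>t x. v t x = Max {inner (lam i k t) x + q i k t | i k. k \<in> {1..N} \<and> i \<in> {1..nk k}}"
  shows "viscosity_subsolution T (hamiltonian A B E U D) v"
proof -
  define J where "J = Sigma {1..N} (\<lambda>k. {1..nk k})"
  define \<phi> where "\<phi> = (\<lambda>(k, i) (t, x). inner (lam i k t) x + q i k t)"
  define P where "P = (\<lambda>(k, i) t (x :: real^'n). lam i k t)"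
  have J: "finite J" "J \<noteq> {}"
    using N nk unfolding J_def by force+
  have "{inner (lam i k t) x + q i k t | i k. k \<in> {1..N} \<and> i \<in> {1..nk k}} = (\<lambda>j. \<phi> j (t, x)) ` J"
    for t x unfolding J_def \<phi>_def by force
  then have v: "v t x = Max ((\<lambda>j. \<phi> j (t, x)) ` J)" for t x
    using v_def by simp
  have grad: "(\<phi> j has_derivative
      (\<lambda>h. inner (hamiltonian A B E U D t x (P j t x), P j t x) h)) (at (t, x))"
    if "j \<in> J" "t \<in> {0<..<T}" for j t x
  proof -
    obtain k i where ki: "j = (k, i)" "k \<in> {1..N}" "i \<in> {1..nk k}"
      using \<open>j \<in> J\<close> unfolding J_def by auto
    have t: "t \<in> {0..T}" "at t within {0..T} = at t"
      using \<open>t \<in> {0<..<T}\<close> by (auto intro: at_within_interior)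
    have "(lam i k has_vector_derivative (- (transpose (A t) *v lam i k t))) (at t)"
      using lam_ode ki t by metis
    moreover have "(q i k has_real_derivative
        (SUP u\<in>U. INF d\<in>D. inner (- lam i k t) (B t *v u + E t *v d))) (at t)"
      using q_ode ki t by metis
    ultimately show ?thesis
      using has_derivative_characteristic_affine[OF U(1,3) D(1,3)]
      unfolding ki \<phi>_def P_def by simp
  qed
  from J v grad show ?thesis
    by (rule viscosity_subsolution_Max_classical_solutions)
qed

end
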